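(* Let $G$ be a group and $\tau\in G$. Define $\mathrm{var}(x)=\tau^{-1}x^{-1}\tau x$, $\mathfrak{C}_1(\tau)=\{x\in G:\mathrm{var}(x)=\mathrm{id}\}$ and $\mathfrak{C}_2(\tau)=\{x\in G:\mathrm{var}(x)\in\mathfrak{C}_1(\tau)\}$. Let $x,y\in\mathfrak{C}_2(\tau)$. Then: (1) $x^{-1}\in\mathfrak{C}_2(\tau)$; (2) $\mathrm{var}(x)$ and $\mathrm{var}(y^{-1})$ commute if and only if $xy\in\mathfrak{C}_2(\tau)$; (3) $\mathrm{var}(x)=\mathrm{var}(y^{-1})$ if and only if $xy\in\mathfrak{C}_1(\tau)$. *)

theory Defs
  imports "HOL-Algebra.Group"
begin

definition var :: "('a, 'b) monoid_scheme \<Rightarrow> 'a \<Rightarrow> 'a \<Rightarrow> 'a" where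
  "var G \<tau> x = inv\<^bsub>G\<^esub> \<tau> \<otimes>\<^bsub>G\<^esub> inv\<^bsub>G\<^esub> x \<otimes>\<^bsub>G\<^esub> \<tau> \<otimes>\<^bsub>G\<^esub> x"

definition C1 :: "('a, 'b) monoid_scheme \<Rightarrow> 'a \<Rightarrow> 'a set" where
  "C1 G \<tau> = {x \<in> carrier G. var G \<tau> x = \<one>\<^bsub>G\<^esub>}"

definition C2 :: "('a, 'b) monoid_scheme \<Rightarrow> 'a \<Rightarrow> 'a set" where
  "C2 G \<tau> = {x \<in> carrier G. var G \<tau> x \<in> C1 G \<tau>}"

end

theory Submission
  imports Defs
begin

text \<open>\<open>var G \<tau> x\<close> is the commutator of \<open>\<tau>\<close> and \<open>x\<close>, so \<open>C1 G \<tau>\<close> is the centralizer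
  of \<open>\<tau>\<close>, and conjugation by \<open>x\<close> sends \<open>\<tau>\<close> to \<open>\<tau> \<otimes> var G \<tau> x\<close>. By the commutator
  identities \<open>var (x y) = var y \<cdot> y\<^sup>-\<^sup>1 (var x) y\<close> and \<open>var (x\<^sup>-\<^sup>1) = x (var x)\<^sup>-\<^sup>1 x\<^sup>-\<^sup>1\<close>,
  membership of \<open>x\<^sup>-\<^sup>1\<close> and of \<open>x y\<close> in \<open>C2 G \<tau>\<close> says that certain elements commute with \<open>\<tau>\<close>.
  Commuting is invariant under conjugation, and factors commuting with \<open>\<tau>\<close> (such as \<open>var x\<close>
  and \<open>var y\<close>) can be cancelled, which reduces these conditions to the stated ones.
  The characterization of \<open>x y \<in> C1 G \<tau>\<close> is a rearrangement of \<open>var (x y) = 1\<close> valid in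
  every group.\<close>

context group
begin

lemma inv_mult_cancel_left [simp]:
  "x \<in> carrier G \<Longrightarrow> y \<in> carrier G \<Longrightarrow> inv x \<otimes> (x \<otimes> y) = y"
  by (simp add: m_assoc[symmetric])

lemma mult_inv_cancel_left [simp]:
  "x \<in> carrier G \<Longrightarrow> y \<in> carrier G \<Longrightarrow> x \<otimes> (inv x \<otimes> y) = y"
  by (simp add: m_assoc[symmetric])

lemma conj_eq_iff:
  assumes "g \<in> carrier G" "u \<in> carrier G" "v \<in> carrier G"
  shows "inv g \<otimes> u \<otimes> g = v \<longleftrightarrow> u = g \<otimes> v \<otimes> inv g"
proof -
  have "g \<otimes> (inv g \<otimes> u \<otimes> g) \<otimes> inv g = u" and "inv g \<otimes> (g \<otimes> v \<otimes> inv g) \<otimes> g = v"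
    using assms by (simp_all add: m_assoc)
  then show ?thesis
    by metis
qed

lemma commute_mult_left_iff:
  assumes "u \<in> carrier G" "v \<in> carrier G" "w \<in> carrier G" "u \<otimes> w = w \<otimes> u"
  shows "(u \<otimes> v) \<otimes> w = w \<otimes> (u \<otimes> v) \<longleftrightarrow> v \<otimes> w = w \<otimes> v"
proof -
  have "w \<otimes> (u \<otimes> v) = u \<otimes> (w \<otimes> v)"
    using assms by (simp flip: m_assoc)
  then show ?thesis
    using assms by (simp add: m_assoc)
qed

lemma commute_conj_iff:
  assumes "g \<in> carrier G" "u \<in> carrier G" "v \<in> carrier G"
  shows "(inv g \<otimes> u \<otimes> g) \<otimes> (inv g \<otimes> v \<otimes> g) = (inv g \<otimes> v \<otimes> g) \<otimes> (inv g \<otimes> u \<otimes> g)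
    \<longleftrightarrow> u \<otimes> v = v \<otimes> u"
proof -
  have conj_mult: "(inv g \<otimes> s \<otimes> g) \<otimes> (inv g \<otimes> t \<otimes> g) = inv g \<otimes> (s \<otimes> t) \<otimes> g"
    if "s \<in> carrier G" "t \<in> carrier G" for s t
    using that assms(1) by (simp add: m_assoc)
  show ?thesis
    using assms by (simp only: conj_mult) simp
qed

lemma var_closed [simp]:
  "\<tau> \<in> carrier G \<Longrightarrow> x \<in> carrier G \<Longrightarrow> var G \<tau> x \<in> carrier G"
  by (simp add: var_def)

lemma var_eq_one_iff:
  assumes "\<tau> \<in> carrier G" "x \<in> carrier G"
  shows "var G \<tau> x = \<one> \<longleftrightarrow> x \<otimes> \<tau> = \<tau> \<otimes> x"
proof -
  have "var G \<tau> x = inv (x \<otimes> \<tau>) \<otimes> (\<tau> \<otimes> x)"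
    using assms by (simp add: var_def m_assoc inv_mult_group)
  then show ?thesis
    using assms by (auto simp: inv_solve_left')
qed

lemma conj_by_var:
  assumes "\<tau> \<in> carrier G" "x \<in> carrier G"
  shows "inv x \<otimes> \<tau> \<otimes> x = \<tau> \<otimes> var G \<tau> x"
  using assms by (simp add: var_def m_assoc)

lemma var_mult:
  assumes "\<tau> \<in> carrier G" "x \<in> carrier G" "y \<in> carrier G"
  shows "var G \<tau> (x \<otimes> y) = var G \<tau> y \<otimes> (inv y \<otimes> var G \<tau> x \<otimes> y)"
  using assms by (simp add: var_def m_assoc inv_mult_group)

lemma var_inv:
  assumes "\<tau> \<in> carrier G" "x \<in> carrier G"
  shows "var G \<tau> (inv x) = x \<otimes> inv (var G \<tau> x) \<otimes> inv x"
  using assms by (simp add: var_def m_assoc inv_mult_group)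

lemma var_mult_eq_one_iff:
  assumes "\<tau> \<in> carrier G" "x \<in> carrier G" "y \<in> carrier G"
  shows "var G \<tau> (x \<otimes> y) = \<one> \<longleftrightarrow> var G \<tau> x = var G \<tau> (inv y)"
proof -
  define a b where "a = var G \<tau> x" and "b = var G \<tau> y"
  have G: "a \<in> carrier G" "b \<in> carrier G"
    using assms by (simp_all add: a_def b_def)
  have "var G \<tau> (x \<otimes> y) = \<one> \<longleftrightarrow> b \<otimes> (inv y \<otimes> a \<otimes> y) = \<one>"
    using assms by (simp add: var_mult a_def b_def)
  also have "\<dots> \<longleftrightarrow> inv y \<otimes> a \<otimes> y = inv b"
    using G assms Units_l_cancel[of b "inv y \<otimes> a \<otimes> y" "inv b"] by simp
  also have "\<dots> \<longleftrightarrow> a = y \<otimes> inv b \<otimes> inv y"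
    using G assms by (simp add: conj_eq_iff)
  finally show ?thesis
    using assms by (simp add: var_inv a_def b_def)
qed

lemma C1_eq:
  assumes "\<tau> \<in> carrier G"
  shows "C1 G \<tau> = {x \<in> carrier G. x \<otimes> \<tau> = \<tau> \<otimes> x}"
  using assms by (auto simp: C1_def var_eq_one_iff)

lemma mem_C2_iff:
  assumes "\<tau> \<in> carrier G"
  shows "x \<in> C2 G \<tau> \<longleftrightarrow> x \<in> carrier G \<and> var G \<tau> x \<otimes> \<tau> = \<tau> \<otimes> var G \<tau> x"
  using assms by (auto simp: C2_def C1_eq)

lemma inv_mem_C2:
  assumes \<tau>: "\<tau> \<in> carrier G" and x: "x \<in> C2 G \<tau>"
  shows "inv x \<in> C2 G \<tau>"
proof -
  define a where "a = var G \<tau> x"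
  have xG: "x \<in> carrier G" and aG: "a \<in> carrier G" and a\<tau>: "a \<otimes> \<tau> = \<tau> \<otimes> a"
    using x \<tau> by (auto simp: mem_C2_iff a_def)
  have conj_var_inv: "inv x \<otimes> var G \<tau> (inv x) \<otimes> x = inv a"
    using \<tau> xG aG by (simp add: var_inv a_def m_assoc)
  have conj_\<tau>: "inv x \<otimes> \<tau> \<otimes> x = \<tau> \<otimes> a"
    using \<tau> xG by (simp add: conj_by_var a_def)
  have "inv a \<otimes> (\<tau> \<otimes> a) = \<tau>"
    using \<tau> aG by (simp flip: a\<tau>)
  moreover have "(\<tau> \<otimes> a) \<otimes> inv a = \<tau>"
    using \<tau> aG by (simp add: m_assoc)
  ultimately have "inv a \<otimes> (\<tau> \<otimes> a) = (\<tau> \<otimes> a) \<otimes> inv a"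
    by simp
  then show ?thesis
    using commute_conj_iff[OF xG, of "var G \<tau> (inv x)" \<tau>] \<tau> xG
    by (simp add: conj_var_inv conj_\<tau> mem_C2_iff)
qed

lemma mult_mem_C2_iff:
  assumes \<tau>: "\<tau> \<in> carrier G" and x: "x \<in> C2 G \<tau>" and y: "y \<in> C2 G \<tau>"
  shows "var G \<tau> x \<otimes> var G \<tau> (inv y) = var G \<tau> (inv y) \<otimes> var G \<tau> x
    \<longleftrightarrow> x \<otimes> y \<in> C2 G \<tau>"
proof -
  define a b c where "a = var G \<tau> x" and "b = var G \<tau> y" and "c = var G \<tau> (inv y)"
  have yG: "y \<in> carrier G" and b\<tau>: "b \<otimes> \<tau> = \<tau> \<otimes> b"
    using y \<tau> by (auto simp: mem_C2_iff b_def)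
  have xG: "x \<in> carrier G" and a\<tau>: "a \<otimes> \<tau> = \<tau> \<otimes> a"
    using x \<tau> by (auto simp: mem_C2_iff a_def)
  have G: "a \<in> carrier G" "b \<in> carrier G" "c \<in> carrier G"
    using \<tau> xG yG by (simp_all add: a_def b_def c_def)
  have "\<tau> \<otimes> c = y \<otimes> \<tau> \<otimes> inv y"
    using conj_by_var[OF \<tau> inv_closed[OF yG]] \<tau> yG by (simp add: c_def)
  then have conj_\<tau>: "inv y \<otimes> (\<tau> \<otimes> c) \<otimes> y = \<tau>"
    using \<tau> yG by (simp add: m_assoc)
  have "x \<otimes> y \<in> C2 G \<tau> \<longleftrightarrow> (b \<otimes> (inv y \<otimes> a \<otimes> y)) \<otimes> \<tau> = \<tau> \<otimes> (b \<otimes> (inv y \<otimes> a \<otimes> y))"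
    using \<tau> xG yG by (simp add: mem_C2_iff var_mult a_def b_def)
  also have "\<dots> \<longleftrightarrow> (inv y \<otimes> a \<otimes> y) \<otimes> \<tau> = \<tau> \<otimes> (inv y \<otimes> a \<otimes> y)"
    using commute_mult_left_iff b\<tau> G \<tau> yG by simp
  also have "\<dots> \<longleftrightarrow> a \<otimes> (\<tau> \<otimes> c) = (\<tau> \<otimes> c) \<otimes> a"
    using commute_conj_iff[of y a "\<tau> \<otimes> c"] G \<tau> yG by (simp add: conj_\<tau>)
  also have "\<dots> \<longleftrightarrow> a \<otimes> c = c \<otimes> a"
    using commute_mult_left_iff[of \<tau> c a] a\<tau> G \<tau> by auto
  finally show ?thesis
    by (simp add: a_def c_def)
qed

lemma mult_mem_C1_iff:
  assumes "\<tau> \<in> carrier G" "x \<in> carrier G" "y \<in> carrier G"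
  shows "var G \<tau> x = var G \<tau> (inv y) \<longleftrightarrow> x \<otimes> y \<in> C1 G \<tau>"
  using assms by (simp add: C1_def var_mult_eq_one_iff)

end

theorem lemmaA2:
  fixes G (structure)
  assumes "group G" and "\<tau> \<in> carrier G"
    and "x \<in> C2 G \<tau>" and "y \<in> C2 G \<tau>"
  shows "inv x \<in> C2 G \<tau>
    \<and> ((var G \<tau> x \<otimes> var G \<tau> (inv y) = var G \<tau> (inv y) \<otimes> var G \<tau> x)
           \<longleftrightarrow> x \<otimes> y \<in> C2 G \<tau>)
    \<and> ((var G \<tau> x = var G \<tau> (inv y)) \<longleftrightarrow> x \<otimes> y \<in> C1 G \<tau>)"
proof -
  interpret group G by fact
  have "x \<in> carrier G" "y \<in> carrier G"
    using assms(3,4) by (auto simp: C2_def)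
  then show ?thesis
    using assms inv_mem_C2 mult_mem_C2_iff mult_mem_C1_iff by blast
qed

end
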